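(* Let $k\ge 2$ be a fixed integer. Then, as $n\to\infty$, $$\mu_{tsp,k}(C_n)\sim\left(1-\frac{1}{2^{k-1}}\right)n,$$ i.e. $\mu_{tsp,k}(C_n)/n\to 1-2^{-(k-1)}$.
   Context: $C_n$ is the cycle on $n$ vertices. For a set $S$ of $k$ vertices of a graph $G$ of order $n$, $\mathrm{tsp}_k(S)$ is the length (number of edge traversals, with multiplicity) of a shortest closed walk in $G$ visiting all vertices of $S$, and $\mu_{tsp,k}(G)=\binom{n}{k}^{-1}\sum_{S\subseteq V,\,|S|=k}\mathrm{tsp}_k(S)$. *)

theory Defs
  imports Complex_Main
begin

definition cycle_adj :: "nat \<Rightarrow> nat \<Rightarrow> nat \<Rightarrow> bool" where
  "cycle_adj n u v \<longleftrightarrow> u < n \<and> v < n \<and> u \<noteq> v \<and> ((u + 1) mod n = v \<or> (v + 1) mod n = u)"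

definition closed_walk :: "('a \<Rightarrow> 'a \<Rightarrow> bool) \<Rightarrow> 'a list \<Rightarrow> bool" where
  "closed_walk E w \<longleftrightarrow> w \<noteq> [] \<and> hd w = last w \<and> (\<forall>i < length w - 1. E (w ! i) (w ! Suc i))"

definition walk_length :: "'a list \<Rightarrow> nat" where
  "walk_length w = length w - 1"

definition tsp :: "('a \<Rightarrow> 'a \<Rightarrow> bool) \<Rightarrow> 'a set \<Rightarrow> nat" where
  "tsp E S = (LEAST m. \<exists>w. closed_walk E w \<and> S \<subseteq> set w \<and> walk_length w = m)"

definition mu_tsp :: "'a set \<Rightarrow> ('a \<Rightarrow> 'a \<Rightarrow> bool) \<Rightarrow> nat \<Rightarrow> real" where
  "mu_tsp V E k = (\<Sum>S \<in> {S. S \<subseteq> V \<and> card S = k}. real (tsp E S)) / real (card V choose k)"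

end

theory Submission
  imports Defs
begin

(* A k-set S with k \<ge> 2 can be toured once around the cycle, or by running from one end of
   the shortest arc containing S to the other and back.  Conversely, a closed walk of length
   l < n misses some edge, so it lives on a path and covers an arc of length at most l/2.
   Hence tsp(S) = min(n, 2 L(S)) with L(S) the length of the shortest arc containing S,
   which gives n \<le> tsp(S) + 2 #{L < ceil(n/2). S lies in an arc of length L} \<le> n + 1.
   For 2L < n a k-set in an arc of length L has a unique first point, so there are
   n C(L, k-1) such sets, and summing over L yields n C(ceil(n/2), k).  Therefore
   mu/n = 1 - 2 C(ceil(n/2), k) / C(n, k) + O(1/n), which tends to 1 - 2 * 2^-k. *)

definition cw_dist :: "nat \<Rightarrow> nat \<Rightarrow> nat \<Rightarrow> nat" where
  "cw_dist n a v = (if a \<le> v then v - a else v + n - a)"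

lemma cw_dist_self [simp]: "cw_dist n a a = 0"
  unfolding cw_dist_def by simp

lemma cw_dist_add_swap: "a < n \<Longrightarrow> v < n \<Longrightarrow> a \<noteq> v \<Longrightarrow> cw_dist n a v + cw_dist n v a = n"
  unfolding cw_dist_def by auto

lemma cw_dist_eq_diff:
  "c < n \<Longrightarrow> a < n \<Longrightarrow> v < n \<Longrightarrow> cw_dist n c a \<le> cw_dist n c v \<Longrightarrow>
    cw_dist n a v = cw_dist n c v - cw_dist n c a"
  unfolding cw_dist_def by (auto split: if_splits)

lemma add_cw_dist_mod: "a < n \<Longrightarrow> v < n \<Longrightarrow> (a + cw_dist n a v) mod n = v"
  unfolding cw_dist_def by (auto simp: le_mod_geq)

lemma cw_dist_add_mod: "a < n \<Longrightarrow> t < n \<Longrightarrow> cw_dist n a ((a + t) mod n) = t"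
  unfolding cw_dist_def by (cases "a + t < n") (auto simp: le_mod_geq)

lemma cw_dist_step:
  "c < n \<Longrightarrow> u < n \<Longrightarrow> (u + 1) mod n = v \<Longrightarrow> u \<noteq> c \<Longrightarrow>
    cw_dist n (Suc c mod n) v = Suc (cw_dist n (Suc c mod n) u)"
  unfolding cw_dist_def by (auto simp: mod_Suc split: if_splits)

lemma cycle_adj_commute: "cycle_adj n u v \<longleftrightarrow> cycle_adj n v u"
  unfolding cycle_adj_def by auto

lemma cycle_adj_mod_Suc:
  assumes "n \<ge> 2"
  shows "cycle_adj n (x mod n) (Suc x mod n)"
  using assms unfolding cycle_adj_def by (auto simp: mod_Suc intro: Suc_lessI)

lemma closed_walk_of_unit_steps:
  fixes g :: "nat \<Rightarrow> nat"
  assumes "n \<ge> 2"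
    and steps: "\<And>i. i < l \<Longrightarrow> g (Suc i) = Suc (g i) \<or> g i = Suc (g (Suc i))"
    and closed: "(a + g 0) mod n = (a + g l) mod n"
  obtains w where "closed_walk (cycle_adj n) w" "set w = (\<lambda>i. (a + g i) mod n) ` {..l}"
    "walk_length w = l"
proof
  let ?w = "map (\<lambda>i. (a + g i) mod n) [0..<Suc l]"
  show "set ?w = (\<lambda>i. (a + g i) mod n) ` {..l}"
    by (simp only: set_map set_upt atLeast0LessThan lessThan_Suc_atMost)
  show "walk_length ?w = l"
    unfolding walk_length_def by simp
  have "cycle_adj n (?w ! i) (?w ! Suc i)" if "i < l" for i
  proof -
    have "?w ! i = (a + g i) mod n" "?w ! Suc i = (a + g (Suc i)) mod n"
      using that by (simp_all del: upt_Suc)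
    then show ?thesis
      using steps[OF that] cycle_adj_mod_Suc[OF \<open>n \<ge> 2\<close>, of "a + _"] cycle_adj_commute
      by (metis add_Suc_right)
  qed
  moreover have "hd ?w = last ?w"
    using closed by (simp add: hd_map last_map hd_upt last_upt del: upt_Suc)
  ultimately show "closed_walk (cycle_adj n) ?w"
    unfolding closed_walk_def by simp
qed

lemma tsp_le_walk_length: "closed_walk E w \<Longrightarrow> S \<subseteq> set w \<Longrightarrow> tsp E S \<le> walk_length w"
  unfolding tsp_def by (rule Least_le) blast

lemma tsp_attained:
  assumes "closed_walk E w0" "S \<subseteq> set w0"
  obtains w where "closed_walk E w" "S \<subseteq> set w" "walk_length w = tsp E S"
proof -
  have "\<exists>w. closed_walk E w \<and> S \<subseteq> set w \<and> walk_length w = tsp E S"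
    unfolding tsp_def by (rule LeastI_ex) (use assms in blast)
  with that show ?thesis by blast
qed

lemma cycle_has_spanning_walk:
  assumes "n \<ge> 2"
  obtains w where "closed_walk (cycle_adj n) w" "{..<n} \<subseteq> set w" "walk_length w = n"
proof -
  obtain w where w: "closed_walk (cycle_adj n) w" "set w = (\<lambda>i. (0 + id i) mod n) ` {..n}"
    "walk_length w = n"
    by (rule closed_walk_of_unit_steps[OF assms, of n id 0]) auto
  have "x \<in> (\<lambda>i. (0 + id i) mod n) ` {..n}" if "x < n" for x
    using that by (intro image_eqI[of _ _ x]) auto
  with w show ?thesis by (intro that[of w]) auto
qed

lemma tsp_cycle_le:
  assumes "n \<ge> 2" "S \<subseteq> {..<n}"
  shows "tsp (cycle_adj n) S \<le> n"
proof -
  obtain w where w: "closed_walk (cycle_adj n) w" "{..<n} \<subseteq> set w" "walk_length w = n"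
    using cycle_has_spanning_walk[OF assms(1)] .
  have "S \<subseteq> set w"
    using assms(2) w(2) by blast
  with w show ?thesis
    using tsp_le_walk_length by metis
qed

definition in_arc :: "nat \<Rightarrow> nat set \<Rightarrow> nat \<Rightarrow> bool" where
  "in_arc n S L \<longleftrightarrow> (\<exists>a<n. \<forall>v\<in>S. cw_dist n a v \<le> L)"

lemma in_arc_mono: "in_arc n S L \<Longrightarrow> L \<le> L' \<Longrightarrow> in_arc n S L'"
  unfolding in_arc_def by (meson order_trans)

lemma tsp_cycle_le_in_arc:
  assumes "n \<ge> 2" "S \<subseteq> {..<n}" "in_arc n S L"
  shows "tsp (cycle_adj n) S \<le> 2 * L"
proof -
  obtain a where a: "a < n" "\<forall>v\<in>S. cw_dist n a v \<le> L"
    using assms(3) unfolding in_arc_def by blast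
  define g where "g i = (if i \<le> L then i else 2 * L - i)" for i
  have steps: "g (Suc i) = Suc (g i) \<or> g i = Suc (g (Suc i))" if "i < 2 * L" for i
    using that unfolding g_def by auto
  have closed: "(a + g 0) mod n = (a + g (2 * L)) mod n"
    unfolding g_def by simp
  obtain w where w: "closed_walk (cycle_adj n) w"
    "set w = (\<lambda>i. (a + g i) mod n) ` {..2 * L}" "walk_length w = 2 * L"
    by (rule closed_walk_of_unit_steps[OF assms(1) steps closed])
  have "v \<in> (\<lambda>i. (a + g i) mod n) ` {..2 * L}" if "v \<in> S" for v
  proof (rule image_eqI)
    show "v = (a + g (cw_dist n a v)) mod n"
      using add_cw_dist_mod[OF a(1)] a(2) that assms(2) unfolding g_def by auto
    show "cw_dist n a v \<in> {..2 * L}"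
      using a(2) that by auto
  qed
  then have "S \<subseteq> set w"
    unfolding w(2) by blast
  then show ?thesis
    using tsp_le_walk_length[OF w(1)] w(3) by simp
qed

lemma unit_steps_abs_diff_le:
  fixes q :: "nat \<Rightarrow> int"
  assumes steps: "\<And>i. i < l \<Longrightarrow> \<bar>q (Suc i) - q i\<bar> \<le> 1" and "i \<le> j" "j \<le> l"
  shows "\<bar>q j - q i\<bar> \<le> int (j - i)"
  using assms(2,3)
proof (induction j)
  case (Suc j)
  show ?case
  proof (cases "i = Suc j")
    case False
    then have "\<bar>q j - q i\<bar> \<le> int (j - i)" "\<bar>q (Suc j) - q j\<bar> \<le> 1"
      using Suc steps by auto
    then show ?thesis
      using False Suc.prems by (simp add: Suc_diff_le)
  qed simp
qed simp

lemma closed_unit_steps_range: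
  fixes q :: "nat \<Rightarrow> int"
  assumes steps: "\<And>i. i < l \<Longrightarrow> \<bar>q (Suc i) - q i\<bar> \<le> 1" and closed: "q 0 = q l"
    and "i \<le> l" "j \<le> l"
  shows "2 * \<bar>q j - q i\<bar> \<le> int l"
proof -
  note D = unit_steps_abs_diff_le[where q = q and l = l, OF steps]
  have *: "2 * \<bar>q j - q i\<bar> \<le> int l" if "i \<le> j" "j \<le> l" for i j
  proof -
    have "\<bar>q j - q i\<bar> \<le> int (j - i)" "\<bar>q i - q 0\<bar> \<le> int (i - 0)" "\<bar>q l - q j\<bar> \<le> int (l - j)"
      using D[of i j] D[of 0 i] D[of j l] that by simp_all
    then have "q j - q i \<le> int j - int i" "q i - q j \<le> int j - int i"
      "q i - q 0 \<le> int i" "q 0 - q i \<le> int i" "q l - q j \<le> int l - int j" "q j - q l \<le> int l - int j"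
      using that by (simp_all add: abs_le_iff of_nat_diff)
    then show ?thesis
      using closed by (cases "q i \<le> q j") simp_all
  qed
  show ?thesis
    using *[of i j] *[of j i] assms(3,4) by (cases "i \<le> j") (auto simp: abs_minus_commute)
qed

lemma closed_unit_steps_near_min:
  fixes q :: "nat \<Rightarrow> nat"
  assumes steps: "\<And>i. i < l \<Longrightarrow> \<bar>int (q (Suc i)) - int (q i)\<bar> \<le> 1" and closed: "q 0 = q l"
  obtains j0 where "j0 \<le> l" "\<forall>i\<le>l. q j0 \<le> q i \<and> 2 * (q i - q j0) \<le> l"
proof -
  obtain j0 where j0: "j0 \<le> l" "\<And>i. i \<le> l \<Longrightarrow> q j0 \<le> q i"
    using ex_has_least_nat[of "\<lambda>j. j \<le> l" 0 q] by auto
  have "int (q 0) = int (q l)"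
    using closed by simp
  then have "2 * (q i - q j0) \<le> l" if "i \<le> l" for i
    using closed_unit_steps_range[where q = "\<lambda>i. int (q i)", OF steps _ j0(1) that] j0(2)[OF that]
    by (simp add: of_nat_diff)
  with j0 that show ?thesis
    by blast
qed

lemma list_avoids_cycle_edge:
  assumes "n \<ge> 3" "length w \<le> n"
  shows "\<exists>c<n. \<forall>i < length w - 1. {w ! i, w ! Suc i} \<noteq> {c, Suc c mod n}"
proof -
  \<comment> \<open>if step i is an edge of the cycle, it is the edge {e i, Suc (e i) mod n}\<close>
  define e where "e i = (if Suc (w ! i) mod n = w ! Suc i then w ! i else w ! Suc i)" for i
  have "card (e ` {..<length w - 1}) < card {..<n}"
    using card_image_le[of "{..<length w - 1}" e] assms by simp
  then have "\<not> {..<n} \<subseteq> e ` {..<length w - 1}"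
    using card_mono[of "e ` {..<length w - 1}" "{..<n}"] by auto
  then obtain c where c: "c < n" "c \<notin> e ` {..<length w - 1}"
    by auto
  have "{w ! i, w ! Suc i} \<noteq> {c, Suc c mod n}" if "i < length w - 1" for i
  proof
    assume edge: "{w ! i, w ! Suc i} = {c, Suc c mod n}"
    consider "Suc (Suc c) < n" | "Suc (Suc c) = n" | "Suc c = n"
      using c(1) by linarith
    then have "Suc (Suc c mod n) mod n \<noteq> c"
      using assms(1) by cases auto
    then have "e i = c"
      using edge unfolding e_def by (auto simp: doubleton_eq_iff)
    then show False
      using c(2) that by blast
  qed
  with c(1) show ?thesis by blast
qed

lemma cw_dist_cut_step:
  assumes "c < n" "cycle_adj n u v" "{u, v} \<noteq> {c, Suc c mod n}"
  shows "\<bar>int (cw_dist n (Suc c mod n) v) - int (cw_dist n (Suc c mod n) u)\<bar> \<le> 1"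
proof (cases "(u + 1) mod n = v")
  case True
  then have "u \<noteq> c"
    using assms(3) by auto
  then show ?thesis
    using cw_dist_step[OF assms(1) _ True] assms(2) unfolding cycle_adj_def by simp
next
  case False
  then have "(v + 1) mod n = u" "v \<noteq> c"
    using assms(2,3) unfolding cycle_adj_def by auto
  then show ?thesis
    using cw_dist_step[OF assms(1), of v u] assms(2) unfolding cycle_adj_def by simp
qed

lemma closed_walk_cycle_nth_lt:
  assumes "closed_walk (cycle_adj n) w" "walk_length w \<ge> 1" "i < length w"
  shows "w ! i < n"
proof (cases "i < walk_length w")
  case True
  then show ?thesis
    using assms(1) unfolding closed_walk_def cycle_adj_def walk_length_def by auto
next
  case False
  then have "i = Suc (walk_length w - 1)" "walk_length w - 1 < length w - 1"
    using assms(2,3) unfolding walk_length_def by auto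
  then show ?thesis
    using assms(1) unfolding closed_walk_def cycle_adj_def by metis
qed

lemma short_closed_walk_in_arc:
  assumes "n \<ge> 3" and w: "closed_walk (cycle_adj n) w"
    and l: "1 \<le> walk_length w" "walk_length w < n"
  shows "in_arc n (set w) (walk_length w div 2)"
proof -
  define l where "l = walk_length w"
  have len: "length w = Suc l"
    using l unfolding l_def walk_length_def by auto
  have "\<exists>c<n. \<forall>i < length w - 1. {w ! i, w ! Suc i} \<noteq> {c, Suc c mod n}"
    using list_avoids_cycle_edge[OF assms(1), of w] len l(2) unfolding l_def by simp
  then obtain c where c: "c < n" "\<forall>i<l. {w ! i, w ! Suc i} \<noteq> {c, Suc c mod n}"
    using len by auto
  define p where "p v = cw_dist n (Suc c mod n) v" for v
  have steps: "\<bar>int (p (w ! Suc i)) - int (p (w ! i))\<bar> \<le> 1" if "i < l" for i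
  proof -
    have "cycle_adj n (w ! i) (w ! Suc i)"
      using w that len unfolding closed_walk_def by simp
    then show ?thesis
      unfolding p_def by (rule cw_dist_cut_step[OF c(1)]) (use c(2) that in blast)
  qed
  have "w ! 0 = w ! l"
    using w len unfolding closed_walk_def by (metis hd_conv_nth last_conv_nth diff_Suc_1)
  then have closed: "p (w ! 0) = p (w ! l)"
    by simp
  obtain j0 where j0: "j0 \<le> l" "\<forall>i\<le>l. p (w ! j0) \<le> p (w ! i) \<and> 2 * (p (w ! i) - p (w ! j0)) \<le> l"
    by (rule closed_unit_steps_near_min[where q = "\<lambda>i. p (w ! i)", OF steps closed])
  have wn: "w ! i < n" if "i \<le> l" for i
    using closed_walk_cycle_nth_lt[OF w l(1)] that len by simp
  have dist: "cw_dist n (w ! j0) (w ! i) \<le> l div 2" if "i \<le> l" for i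
  proof -
    have "cw_dist n (w ! j0) (w ! i) = p (w ! i) - p (w ! j0)"
      unfolding p_def by (rule cw_dist_eq_diff[OF _ wn[OF j0(1)] wn[OF that]])
        (use assms(1) j0(2) that in \<open>auto simp: p_def\<close>)
    then show ?thesis
      using j0(2) that by fastforce
  qed
  show ?thesis
    unfolding in_arc_def
  proof (intro exI conjI ballI)
    show "w ! j0 < n"
      using wn j0(1) .
    fix v assume "v \<in> set w"
    then obtain i where "i \<le> l" "v = w ! i"
      using len by (metis in_set_conv_nth less_Suc_eq_le)
    then show "cw_dist n (w ! j0) v \<le> walk_length w div 2"
      using dist unfolding l_def by simp
  qed
qed

lemma tsp_cycle_in_arc:
  assumes "n \<ge> 3" "S \<subseteq> {..<n}" "card S \<ge> 2" "tsp (cycle_adj n) S < n"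
  shows "in_arc n S (tsp (cycle_adj n) S div 2)"
proof -
  have "n \<ge> 2"
    using assms(1) by simp
  then obtain w0 where w0: "closed_walk (cycle_adj n) w0" "{..<n} \<subseteq> set w0" "walk_length w0 = n"
    by (rule cycle_has_spanning_walk)
  have "S \<subseteq> set w0"
    using assms(2) w0(2) by blast
  then obtain w where w: "closed_walk (cycle_adj n) w" "S \<subseteq> set w"
    "walk_length w = tsp (cycle_adj n) S"
    by (rule tsp_attained[OF w0(1)])
  have "walk_length w \<ge> 1"
  proof (rule ccontr)
    assume "\<not> walk_length w \<ge> 1"
    moreover have "length w \<noteq> 0"
      using w(1) unfolding closed_walk_def by simp
    ultimately have "length w = 1"
      unfolding walk_length_def by linarith
    then obtain x where "w = [x]"
      by (auto simp: length_Suc_conv)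
    then show False
      using w(2) assms(3) card_mono[of "{x}" S] by simp
  qed
  then have "in_arc n (set w) (walk_length w div 2)"
    using short_closed_walk_in_arc[OF assms(1) w(1)] w(3) assms(4) by simp
  then show ?thesis
    using w(2,3) unfolding in_arc_def by auto
qed

lemma in_arc_from_member:
  assumes "S \<subseteq> {..<n}" "S \<noteq> {}" "in_arc n S L"
  obtains a where "a \<in> S" "\<forall>v\<in>S. cw_dist n a v \<le> L"
proof -
  obtain c where c: "c < n" "\<forall>v\<in>S. cw_dist n c v \<le> L"
    using assms(3) unfolding in_arc_def by blast
  have "finite S"
    using assms(1) finite_subset by blast
  then obtain a where a: "a \<in> S" "\<forall>v\<in>S. cw_dist n c a \<le> cw_dist n c v"
    using ex_has_least_nat[of "\<lambda>v. v \<in> S" _ "cw_dist n c"] assms(2) by blast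
  have "cw_dist n a v \<le> L" if "v \<in> S" for v
    using cw_dist_eq_diff[OF c(1), of a v] a c(2) that assms(1) by fastforce
  with a(1) that show ?thesis by blast
qed

definition arc_subsets :: "nat \<Rightarrow> nat \<Rightarrow> nat \<Rightarrow> nat \<Rightarrow> nat set set" where
  "arc_subsets n k L a = {S. S \<subseteq> {..<n} \<and> card S = k \<and> a \<in> S \<and> (\<forall>v\<in>S. cw_dist n a v \<le> L)}"

lemma card_subsets_containing:
  assumes "finite A" "x \<notin> A"
  shows "card {T. T \<subseteq> insert x A \<and> x \<in> T \<and> card T = Suc m} = card A choose m"
proof -
  have "{T. T \<subseteq> insert x A \<and> x \<in> T \<and> card T = Suc m} = insert x ` {R. R \<subseteq> A \<and> card R = m}"
  proof (intro equalityI subsetI)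
    fix T assume T: "T \<in> {T. T \<subseteq> insert x A \<and> x \<in> T \<and> card T = Suc m}"
    then have "T - {x} \<subseteq> A" "card (T - {x}) = m"
      using assms(1) finite_subset[of T "insert x A"] by auto
    with T show "T \<in> insert x ` {R. R \<subseteq> A \<and> card R = m}"
      by (intro image_eqI[of _ _ "T - {x}"]) auto
  qed (use assms finite_subset in \<open>auto simp: card_insert_if\<close>)
  moreover have "inj_on (insert x) {R. R \<subseteq> A \<and> card R = m}"
    using assms(2) by (intro inj_onI) (metis Diff_insert_absorb mem_Collect_eq subset_iff)
  ultimately show ?thesis
    using n_subsets[OF assms(1)] by (simp add: card_image)
qed

lemma inj_on_cw_dist:
  assumes "a < n"
  shows "inj_on (cw_dist n a) {..<n}"
  by (rule inj_on_inverseI[where g = "\<lambda>t. (a + t) mod n"]) (simp add: add_cw_dist_mod assms)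

lemma inj_on_add_mod:
  fixes a n :: nat
  assumes "a < n"
  shows "inj_on (\<lambda>t. (a + t) mod n) {..<n}"
  by (rule inj_on_inverseI[where g = "cw_dist n a"]) (simp add: cw_dist_add_mod assms)

lemma cw_dist_image_arc_subsets:
  assumes a: "a < n" and L: "L < n"
  shows "(\<lambda>S. cw_dist n a ` S) ` arc_subsets n k L a = {T. T \<subseteq> {..L} \<and> 0 \<in> T \<and> card T = k}"
proof (intro equalityI subsetI)
  fix T assume "T \<in> (\<lambda>S. cw_dist n a ` S) ` arc_subsets n k L a"
  then obtain S where S: "S \<subseteq> {..<n}" "card S = k" "a \<in> S" "\<forall>v\<in>S. cw_dist n a v \<le> L"
    and T: "T = cw_dist n a ` S"
    unfolding arc_subsets_def by auto
  have "card T = k"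
    unfolding T using S(2) inj_on_subset[OF inj_on_cw_dist[OF a] S(1)] by (simp add: card_image)
  moreover have "0 \<in> T"
    unfolding T using S(3) by (metis cw_dist_self image_eqI)
  ultimately show "T \<in> {T. T \<subseteq> {..L} \<and> 0 \<in> T \<and> card T = k}"
    unfolding T using S(4) by auto
next
  fix T assume "T \<in> {T. T \<subseteq> {..L} \<and> 0 \<in> T \<and> card T = k}"
  then have T: "T \<subseteq> {..<n}" "T \<subseteq> {..L}" "0 \<in> T" "card T = k"
    using L by auto
  define S where "S = (\<lambda>t. (a + t) mod n) ` T"
  have "\<forall>t\<in>T. cw_dist n a ((a + t) mod n) = t"
    using cw_dist_add_mod[OF a] T(1) by blast
  then have "cw_dist n a ` S = T"
    unfolding S_def by (simp add: image_image)
  moreover have "card S = k"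
    unfolding S_def using T(4) inj_on_subset[OF inj_on_add_mod[OF a] T(1)] by (simp add: card_image)
  moreover have "a \<in> S"
    unfolding S_def using T(3) a by (intro image_eqI[of _ _ 0]) auto
  ultimately have "S \<in> arc_subsets n k L a"
    unfolding arc_subsets_def S_def using T(2) a by auto
  with \<open>cw_dist n a ` S = T\<close> show "T \<in> (\<lambda>S. cw_dist n a ` S) ` arc_subsets n k L a"
    by blast
qed

lemma card_arc_subsets:
  assumes "a < n" "L < n"
  shows "card (arc_subsets n (Suc m) L a) = L choose m"
proof -
  have "arc_subsets n (Suc m) L a \<subseteq> Pow {..<n}"
    unfolding arc_subsets_def by blast
  then have "inj_on (\<lambda>S. cw_dist n a ` S) (arc_subsets n (Suc m) L a)"
    using inj_on_subset[OF inj_on_image_Pow[OF inj_on_cw_dist[OF assms(1)]]] by blast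
  then have "card (arc_subsets n (Suc m) L a) = card ((\<lambda>S. cw_dist n a ` S) ` arc_subsets n (Suc m) L a)"
    by (simp add: card_image)
  also have "\<dots> = card {T. T \<subseteq> {..L} \<and> 0 \<in> T \<and> card T = Suc m}"
    by (simp only: cw_dist_image_arc_subsets[OF assms])
  also have "{..L} = insert 0 {0<..L}"
    by auto
  finally show ?thesis
    using card_subsets_containing[of "{0<..L}" 0 m] by simp
qed

lemma card_in_arc:
  assumes "2 * L < n"
  shows "card {S. S \<subseteq> {..<n} \<and> card S = Suc m \<and> in_arc n S L} = n * (L choose m)"
proof -
  have eq: "{S. S \<subseteq> {..<n} \<and> card S = Suc m \<and> in_arc n S L} = (\<Union>a<n. arc_subsets n (Suc m) L a)"
  proof (intro equalityI subsetI)
    fix S assume S: "S \<in> {S. S \<subseteq> {..<n} \<and> card S = Suc m \<and> in_arc n S L}"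
    then have "S \<noteq> {}"
      by auto
    then obtain a where "a \<in> S" "\<forall>v\<in>S. cw_dist n a v \<le> L"
      using in_arc_from_member S by blast
    with S show "S \<in> (\<Union>a<n. arc_subsets n (Suc m) L a)"
      unfolding arc_subsets_def by auto
  qed (auto simp: arc_subsets_def in_arc_def)
  have disjoint: "arc_subsets n (Suc m) L a \<inter> arc_subsets n (Suc m) L b = {}"
    if "a < n" "b < n" "a \<noteq> b" for a b
  proof -
    have "\<not> (cw_dist n a b \<le> L \<and> cw_dist n b a \<le> L)"
      using cw_dist_add_swap[OF that] assms by linarith
    then show ?thesis
      unfolding arc_subsets_def by blast
  qed
  have finite: "finite (arc_subsets n (Suc m) L a)" for a
    by (rule finite_subset[of _ "Pow {..<n}"]) (auto simp: arc_subsets_def)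
  have "card {S. S \<subseteq> {..<n} \<and> card S = Suc m \<and> in_arc n S L} = (\<Sum>a<n. card (arc_subsets n (Suc m) L a))"
    unfolding eq by (rule card_UN_disjoint) (use finite disjoint in auto)
  also have "\<dots> = n * (L choose m)"
    using card_arc_subsets assms by simp
  finally show ?thesis .
qed

lemma sum_lessThan_choose: "(\<Sum>L<h. L choose m) = h choose Suc m"
  by (induction h) simp_all

lemma sum_card_in_arc:
  "(\<Sum>S\<in>{S. S \<subseteq> {..<n} \<and> card S = Suc m}. card {L \<in> {..<(n + 1) div 2}. in_arc n S L})
     = n * ((n + 1) div 2 choose Suc m)"
proof -
  let ?K = "{S. S \<subseteq> {..<n} \<and> card S = Suc m}"
  have "finite ?K"
    by (rule finite_subset[of _ "Pow {..<n}"]) auto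
  then have "(\<Sum>S\<in>?K. card {L \<in> {..<(n + 1) div 2}. in_arc n S L})
      = (\<Sum>L<(n + 1) div 2. card {S \<in> ?K. in_arc n S L})"
    using sum.swap_restrict[of ?K "{..<(n + 1) div 2}" "\<lambda>_ _. 1::nat" "\<lambda>S L. in_arc n S L"]
    by simp
  also have "\<dots> = (\<Sum>L<(n + 1) div 2. n * (L choose m))"
    by (intro sum.cong refl) (auto simp: card_in_arc conj_assoc)
  also have "\<dots> = n * ((n + 1) div 2 choose Suc m)"
    by (simp add: sum_distrib_left[symmetric] sum_lessThan_choose)
  finally show ?thesis .
qed

(* G consists of all L < ceil(n/2) from the least arc length L0 of S on,
   and tsp(S) = min(n, 2 L0). *)
lemma tsp_cycle_sandwich:
  assumes n: "n \<ge> 3" and S: "S \<subseteq> {..<n}" "card S \<ge> 2"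
  defines "G \<equiv> {L \<in> {..<(n + 1) div 2}. in_arc n S L}"
  shows "n \<le> tsp (cycle_adj n) S + 2 * card G"
    and "tsp (cycle_adj n) S + 2 * card G \<le> n + 1"
proof -
  define h where "h = (n + 1) div 2"
  define T where "T = tsp (cycle_adj n) S"
  have mem_G: "L \<in> G \<longleftrightarrow> L < h \<and> in_arc n S L" for L
    unfolding G_def h_def by simp
  have "finite G"
    unfolding G_def by simp
  show "n \<le> T + 2 * card G"
  proof (cases "T < n")
    case True
    then have "in_arc n S (T div 2)"
      unfolding T_def using tsp_cycle_in_arc[OF n S] by blast
    then have "{T div 2..<h} \<subseteq> G"
      using in_arc_mono[of n S "T div 2"] mem_G by auto
    then have "card {T div 2..<h} \<le> card G"
      by (rule card_mono[OF \<open>finite G\<close>])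
    then show ?thesis
      unfolding h_def by simp
  qed simp
  show "T + 2 * card G \<le> n + 1"
  proof (cases "G = {}")
    case True
    then show ?thesis
      using tsp_cycle_le[OF _ S(1)] n unfolding T_def by simp
  next
    case False
    define L0 where "L0 = Min G"
    have "L0 \<in> G"
      unfolding L0_def using \<open>finite G\<close> False by (rule Min_in)
    then have L0: "L0 < h" "in_arc n S L0"
      using mem_G by auto
    have "G \<subseteq> {L0..<h}"
    proof
      fix L assume "L \<in> G"
      then show "L \<in> {L0..<h}"
        using Min_le[OF \<open>finite G\<close>] mem_G unfolding L0_def by simp
    qed
    then have "card G \<le> h - L0"
      using card_mono[of "{L0..<h}" G] by simp
    moreover have "T \<le> 2 * L0"
      unfolding T_def using tsp_cycle_le_in_arc[OF _ S(1) L0(2)] n by simp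
    moreover have "2 * h \<le> n + 1"
      unfolding h_def by simp
    ultimately show ?thesis
      using L0(1) by linarith
  qed
qed

lemma sum_tsp_cycle_bounds:
  assumes n: "n \<ge> 3" and k: "k \<ge> 2"
  defines "T \<equiv> (\<Sum>S\<in>{S. S \<subseteq> {..<n} \<and> card S = k}. tsp (cycle_adj n) S)"
  shows "n * (n choose k) \<le> T + 2 * n * ((n + 1) div 2 choose k)"
    and "T + 2 * n * ((n + 1) div 2 choose k) \<le> (n + 1) * (n choose k)"
proof -
  let ?K = "{S. S \<subseteq> {..<n} \<and> card S = k}"
  let ?G = "\<lambda>S. card {L \<in> {..<(n + 1) div 2}. in_arc n S L}"
  obtain m where m: "k = Suc m"
    using k by (cases k) auto
  have "(\<Sum>S\<in>?K. tsp (cycle_adj n) S + 2 * ?G S) = T + 2 * n * ((n + 1) div 2 choose k)"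
    unfolding T_def sum.distrib sum_distrib_left[symmetric] m sum_card_in_arc by simp
  moreover have "card ?K = n choose k"
    using n_subsets[of "{..<n}" k] by simp
  moreover have "(\<Sum>S\<in>?K. n) \<le> (\<Sum>S\<in>?K. tsp (cycle_adj n) S + 2 * ?G S)"
    by (rule sum_mono) (use tsp_cycle_sandwich(1)[OF n] k in simp)
  moreover have "(\<Sum>S\<in>?K. tsp (cycle_adj n) S + 2 * ?G S) \<le> (\<Sum>S\<in>?K. n + 1)"
    by (rule sum_mono) (use tsp_cycle_sandwich(2)[OF n] k in simp)
  ultimately show "n * (n choose k) \<le> T + 2 * n * ((n + 1) div 2 choose k)"
    and "T + 2 * n * ((n + 1) div 2 choose k) \<le> (n + 1) * (n choose k)"
    by (simp_all add: mult.commute)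
qed

lemma mu_tsp_cycle_bounds:
  assumes n: "n \<ge> 3" and k: "k \<ge> 2" "k \<le> n"
  defines "r \<equiv> real ((n + 1) div 2 choose k) / real (n choose k)"
  shows "1 - 2 * r \<le> mu_tsp {..<n} (cycle_adj n) k / real n"
    and "mu_tsp {..<n} (cycle_adj n) k / real n \<le> 1 + 1 / real n - 2 * r"
proof -
  define T where "T = (\<Sum>S\<in>{S. S \<subseteq> {..<n} \<and> card S = k}. tsp (cycle_adj n) S)"
  define c where "c = real n * real (n choose k)"
  define d where "d = 2 * real n * real ((n + 1) div 2 choose k)"
  have lower: "c - d \<le> real T"
  proof -
    have "real (n * (n choose k)) \<le> real (T + 2 * n * ((n + 1) div 2 choose k))"
      using sum_tsp_cycle_bounds(1)[OF n k(1), folded T_def] by (simp only: of_nat_le_iff)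
    then show ?thesis
      unfolding c_def d_def by simp
  qed
  have upper: "real T \<le> c + real (n choose k) - d"
  proof -
    have "real (T + 2 * n * ((n + 1) div 2 choose k)) \<le> real ((n + 1) * (n choose k))"
      using sum_tsp_cycle_bounds(2)[OF n k(1), folded T_def] by (simp only: of_nat_le_iff)
    then show ?thesis
      unfolding c_def d_def by (simp add: algebra_simps)
  qed
  have "real n > 0" "real (n choose k) > 0"
    using n k by simp_all
  then have "c > 0" "1 - 2 * r = (c - d) / c" "1 + 1 / real n - 2 * r = (c + real (n choose k) - d) / c"
    unfolding c_def d_def r_def by (simp_all add: field_simps)
  moreover have "mu_tsp {..<n} (cycle_adj n) k / real n = real T / c"
    unfolding mu_tsp_def T_def c_def by simp
  ultimately show "1 - 2 * r \<le> mu_tsp {..<n} (cycle_adj n) k / real n"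
    and "mu_tsp {..<n} (cycle_adj n) k / real n \<le> 1 + 1 / real n - 2 * r"
    using lower upper by (simp_all add: divide_right_mono)
qed

lemma choose_ratio_tendsto:
  fixes f :: "nat \<Rightarrow> nat"
  assumes f: "(\<lambda>n. real (f n) / real n) \<longlonglongrightarrow> c"
  shows "(\<lambda>n. real (f n choose k) / real (n choose k)) \<longlonglongrightarrow> c ^ k"
proof -
  have factor: "(\<lambda>n. (real (f n) - real i) / (real n - real i)) \<longlonglongrightarrow> c" for i
  proof -
    have "(\<lambda>n. (real (f n) / real n - real i / real n) / (1 - real i / real n)) \<longlonglongrightarrow> (c - 0) / (1 - 0)"
      by (intro tendsto_intros f) simp
    moreover have "\<forall>\<^sub>F n in sequentially. (real (f n) / real n - real i / real n) / (1 - real i / real n)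
        = (real (f n) - real i) / (real n - real i)"
      using eventually_gt_at_top[of i] by eventually_elim (simp add: field_simps)
    ultimately show ?thesis
      by (simp add: tendsto_cong)
  qed
  have choose_prod: "real (m choose k) = (\<Prod>i<k. (real m - real i) / real (k - i))" for m
    by (simp add: binomial_gbinomial gbinomial_altdef_of_nat atLeast0LessThan)
  have "\<forall>\<^sub>F n in sequentially. (\<Prod>i<k. (real (f n) - real i) / (real n - real i))
      = real (f n choose k) / real (n choose k)"
    using eventually_gt_at_top[of k] by eventually_elim (auto simp: choose_prod prod_dividef intro!: prod.cong)
  moreover have "(\<lambda>n. \<Prod>i<k. (real (f n) - real i) / (real n - real i)) \<longlonglongrightarrow> (\<Prod>i<k. c)"
    by (intro tendsto_prod factor)
  ultimately show ?thesis
    by (simp add: tendsto_cong)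
qed

lemma half_ceiling_over_n_tendsto: "(\<lambda>n. real ((n + 1) div 2) / real n) \<longlonglongrightarrow> 1 / 2"
proof (rule real_tendsto_sandwich)
  have bounds: "1 / 2 \<le> real ((n + 1) div 2) / real n \<and> real ((n + 1) div 2) / real n \<le> 1 / 2 + (1 / 2) / real n"
    if "n > 0" for n
  proof -
    have "real n \<le> 2 * real ((n + 1) div 2)" "2 * real ((n + 1) div 2) \<le> real n + 1"
      by linarith+
    then show ?thesis
      using that by (simp add: field_simps)
  qed
  show "\<forall>\<^sub>F n in sequentially. 1 / 2 \<le> real ((n + 1) div 2) / real n"
    using eventually_gt_at_top[of 0] by (rule eventually_mono) (use bounds in blast)
  show "\<forall>\<^sub>F n in sequentially. real ((n + 1) div 2) / real n \<le> 1 / 2 + (1 / 2) / real n"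
    using eventually_gt_at_top[of 0] by (rule eventually_mono) (use bounds in blast)
  have "(\<lambda>n. 1 / 2 + (1 / 2) / real n) \<longlonglongrightarrow> 1 / 2 + (0::real)"
    by (intro tendsto_intros)
  then show "(\<lambda>n. 1 / 2 + (1 / 2) / real n) \<longlonglongrightarrow> 1 / 2"
    by simp
qed simp

theorem lemma1:
  fixes k :: nat
  assumes "k \<ge> 2"
  shows "(\<lambda>n. mu_tsp {..<n} (cycle_adj n) k / real n) \<longlonglongrightarrow> 1 - 1 / 2 ^ (k - 1)"
proof -
  define r where "r n = real ((n + 1) div 2 choose k) / real (n choose k)" for n
  have r: "r \<longlonglongrightarrow> (1 / 2) ^ k"
    unfolding r_def by (rule choose_ratio_tendsto[OF half_ceiling_over_n_tendsto])
  have limit: "1 - 2 * (1 / 2) ^ k = 1 - 1 / (2::real) ^ (k - 1)"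
    using assms by (cases k) (simp_all add: power_divide)
  have large: "\<forall>\<^sub>F n in sequentially. n \<ge> 3 \<and> k \<le> n"
    by (intro eventually_conj eventually_ge_at_top)
  show ?thesis
  proof (rule real_tendsto_sandwich)
    show "\<forall>\<^sub>F n in sequentially. 1 - 2 * r n \<le> mu_tsp {..<n} (cycle_adj n) k / real n"
      using large by eventually_elim (use mu_tsp_cycle_bounds(1) assms r_def in auto)
    show "\<forall>\<^sub>F n in sequentially. mu_tsp {..<n} (cycle_adj n) k / real n \<le> 1 + 1 / real n - 2 * r n"
      using large by eventually_elim (use mu_tsp_cycle_bounds(2) assms r_def in auto)
    have "(\<lambda>n. 1 - 2 * r n) \<longlonglongrightarrow> 1 - 2 * (1 / 2) ^ k"
      by (intro tendsto_intros r)
    then show "(\<lambda>n. 1 - 2 * r n) \<longlonglongrightarrow> 1 - 1 / 2 ^ (k - 1)"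
      unfolding limit .
    have "(\<lambda>n. 1 + 1 / real n - 2 * r n) \<longlonglongrightarrow> 1 + 0 - 2 * (1 / 2) ^ k"
      by (intro tendsto_intros r)
    then show "(\<lambda>n. 1 + 1 / real n - 2 * r n) \<longlonglongrightarrow> 1 - 1 / 2 ^ (k - 1)"
      unfolding add_0_right limit .
  qed
qed

end
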